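(* Let $V_1,V_2$ be $\mathbb{N}$-valued random variables, $(X_k)_{k\ge1}$ and $(Y_k)_{k\ge1}$ sequences of i.i.d. nonnegative random variables, with $V_1,V_2,(X_k)_{k\ge1},(Y_k)_{k\ge1}$ independent. Let $r\in(1,2]$ and assume $\mathbb{E}[X_1^r+Y_1^r]<+\infty$ and $\mathbb{E}[V_1^r+V_2^r]<+\infty$. If $r=2$, $$\mathbb{E}\Big[\Big(\sum_{i=1}^{V_1}X_i+\sum_{i=1}^{V_2}Y_i\Big)^2\Big]=\mathbb{E}[V_1]\mathrm{Var}(X_1)+\mathbb{E}[V_2]\mathrm{Var}(Y_1)+2\mathbb{E}[V_1]\mathbb{E}[V_2]\mathbb{E}[X_1]\mathbb{E}[Y_1]+\mathbb{E}[V_1^2]\mathbb{E}[X_1]^2+\mathbb{E}[V_2^2]\mathbb{E}[Y_1]^2,$$ while if $r\in(1,2)$, $$\mathbb{E}\Big[\Big(\sum_{i=1}^{V_1}X_i+\sum_{i=1}^{V_2}Y_i\Big)^r\Big]\le\mathbb{E}[V_1]\mathbb{E}[X_1^r]+\mathbb{E}[V_2]\mathbb{E}[Y_1^r]+\big(2\mathbb{E}[V_1]\mathbb{E}[V_2]\mathbb{E}[X_1]\mathbb{E}[Y_1]\big)^{r/2}+\mathbb{E}[V_1^r]\mathbb{E}[X_1]^r+\mathbb{E}[V_2^r]\mathbb{E}[Y_1]^r.$$ *)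

theory Defs
  imports "HOL-Probability.Probability"
begin

datatype rv_index = IV1 | IV2 | IX nat | IY nat

definition rv_family ::
  "('a \<Rightarrow> nat) \<Rightarrow> ('a \<Rightarrow> nat) \<Rightarrow> (nat \<Rightarrow> 'a \<Rightarrow> real) \<Rightarrow> (nat \<Rightarrow> 'a \<Rightarrow> real)
    \<Rightarrow> rv_index \<Rightarrow> 'a \<Rightarrow> real" where
  "rv_family V1 V2 X Y i = (case i of IV1 \<Rightarrow> (\<lambda>\<omega>. real (V1 \<omega>)) | IV2 \<Rightarrow> (\<lambda>\<omega>. real (V2 \<omega>))
     | IX k \<Rightarrow> X k | IY k \<Rightarrow> Y k)"

definition rv_indices :: "rv_index set" where
  "rv_indices = {IV1, IV2} \<union> IX ` {1..} \<union> IY ` {1..}"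

end

theory Submission
  imports Defs
begin

text \<open>Since the indices \<open>V1\<close>, \<open>V2\<close> are independent of the summands, a moment of the
  random sum is obtained by computing it for deterministic numbers of summands \<open>n\<close>, \<open>m\<close> and
  then integrating over the law of \<open>(V1, V2)\<close>.

  For fixed \<open>n\<close>, \<open>m\<close> put \<open>A = X\<^sub>1 + \<dots> + X\<^sub>n\<close> and \<open>B = Y\<^sub>1 + \<dots> + Y\<^sub>m\<close>. The square
  \<open>A\<^sup>2\<close> is the diagonal sum of the \<open>X\<^sub>i\<^sup>2\<close> plus the off-diagonal sum of the \<open>X\<^sub>i X\<^sub>j\<close>,
  \<open>i \<noteq> j\<close>, whose mean is \<open>(n\<^sup>2 - n) E[X\<^sub>1]\<^sup>2\<close> by pairwise independence; with
  \<open>E[A B] = E[A] E[B]\<close> this gives the case \<open>r = 2\<close>. For \<open>r < 2\<close> write \<open>t\<^sup>r = (t\<^sup>2)\<^bsup>r/2\<^esup>\<close>: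
  subadditivity of \<open>t \<mapsto> t\<^bsup>r/2\<^esup>\<close> bounds \<open>(A + B)\<^sup>r\<close> by the diagonal terms \<open>X\<^sub>i\<^sup>r\<close>,
  \<open>Y\<^sub>j\<^sup>r\<close> and the \<open>r/2\<close>-th powers of the off-diagonal and cross terms, and Jensen's
  inequality for the concave \<open>t \<mapsto> t\<^bsup>r/2\<^esup>\<close> bounds the means of the latter by the
  \<open>r/2\<close>-th powers of their means. The same Jensen step handles
  \<open>E[(2 V1 V2 E[X\<^sub>1] E[Y\<^sub>1])\<^bsup>r/2\<^esup>]\<close> after integrating over the indices.\<close>

lemma powr_add_le_add_powr:
  fixes x y s :: real
  assumes "0 \<le> x" "0 \<le> y" "0 < s" "s \<le> 1"
  shows "(x + y) powr s \<le> x powr s + y powr s"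
proof (cases "x + y = 0")
  case True
  then show ?thesis using assms by simp
next
  case False
  then have xy: "x + y > 0" using assms by simp
  define t where "t = x / (x + y)"
  have t: "0 \<le> t" "t \<le> 1" using assms xy by (auto simp: t_def field_simps)
  have x: "x = t * (x + y)" and y: "y = (1 - t) * (x + y)"
    using xy by (auto simp: t_def field_simps)
  have le_powr: "u \<le> u powr s" if "0 \<le> u" "u \<le> 1" for u :: real
    using that assms by (metis powr_mono' powr_one)
  have "(x + y) powr s = (t + (1 - t)) * (x + y) powr s" by simp
  also have "\<dots> \<le> (t powr s + (1 - t) powr s) * (x + y) powr s"
    using t by (intro mult_right_mono add_mono le_powr) auto
  also have "\<dots> = (t * (x + y)) powr s + ((1 - t) * (x + y)) powr s"
    using t xy by (simp add: powr_mult distrib_right)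
  finally show ?thesis by (simp only: x [symmetric] y [symmetric])
qed

lemma powr_sum_le_sum_powr:
  fixes f :: "'i \<Rightarrow> real"
  assumes "finite K" "\<And>i. i \<in> K \<Longrightarrow> 0 \<le> f i" "0 < s" "s \<le> 1"
  shows "(\<Sum>i\<in>K. f i) powr s \<le> (\<Sum>i\<in>K. f i powr s)"
  using assms
proof (induction K rule: finite_induct)
  case (insert a K)
  have "(\<Sum>i\<in>insert a K. f i) powr s \<le> f a powr s + (\<Sum>i\<in>K. f i) powr s"
    using insert by (simp add: powr_add_le_add_powr sum_nonneg)
  also have "\<dots> \<le> f a powr s + (\<Sum>i\<in>K. f i powr s)"
    using insert by simp
  finally show ?case using insert by simp
qed simp

lemma powr_le_tangent:
  fixes t a s :: real
  assumes "0 \<le> t" "0 < a" "0 < s" "s \<le> 1"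
  shows "t powr s \<le> (1 - s) * a powr s + s * a powr (s - 1) * t"
proof (cases "t = 0")
  case True
  then show ?thesis using assms by simp
next
  case False
  have "t powr s = (t powr s * a powr (1 - s)) * a powr (s - 1)"
    using assms by (simp add: mult.assoc powr_add[symmetric])
  also have "\<dots> \<le> (s * t + (1 - s) * a) * a powr (s - 1)"
    using Youngs_inequality_0[of s "1 - s" t a] assms False
    by (intro mult_right_mono) auto
  also have "\<dots> = (1 - s) * a powr s + s * a powr (s - 1) * t"
    using assms by (simp add: algebra_simps powr_mult_base)
  finally show ?thesis .
qed

lemma powr_le_one_plus:
  fixes x s :: real
  assumes "0 \<le> x" "0 \<le> s" "s \<le> 1"
  shows "x powr s \<le> 1 + x"
proof (cases "x \<le> 1")
  case True
  then show ?thesis using assms powr_le1[of s x] by simp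
next
  case False
  then show ?thesis using assms powr_mono[of s 1 x] by simp
qed

lemma le_one_plus_powr:
  fixes x r :: real
  assumes "0 \<le> x" "1 \<le> r"
  shows "x \<le> 1 + x powr r"
proof (cases "x \<le> 1")
  case False
  then show ?thesis using assms powr_mono[of 1 r x] by simp
qed (simp add: add_increasing2)

lemma powr_eq_power2_powr_half:
  fixes x r :: real
  assumes "0 \<le> x"
  shows "x powr r = (x\<^sup>2) powr (r / 2)"
proof -
  have "x\<^sup>2 = x powr 2"
    using assms by (simp add: powr_realpow')
  then show ?thesis by (simp add: powr_powr)
qed

lemma power2_sum_eq_diagonal_plus_offdiagonal:
  fixes f :: "'i \<Rightarrow> real"
  assumes "finite K"
  shows "(\<Sum>i\<in>K. f i)\<^sup>2 = (\<Sum>i\<in>K. (f i)\<^sup>2) + (\<Sum>i\<in>K. \<Sum>j\<in>K - {i}. f i * f j)"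
proof -
  have "(\<Sum>i\<in>K. f i)\<^sup>2 = (\<Sum>i\<in>K. \<Sum>j\<in>K. f i * f j)"
    by (simp add: power2_eq_square sum_product)
  also have "\<dots> = (\<Sum>i\<in>K. (f i)\<^sup>2 + (\<Sum>j\<in>K - {i}. f i * f j))"
    using assms by (intro sum.cong refl) (simp add: sum.remove power2_eq_square)
  finally show ?thesis by (simp add: sum.distrib)
qed

lemma powr_sum_le_sum_powr_plus_offdiagonal:
  fixes u :: "'i \<Rightarrow> real"
  assumes "finite K" "\<And>i. i \<in> K \<Longrightarrow> 0 \<le> u i" "0 < r" "r \<le> 2"
  shows "(\<Sum>i\<in>K. u i) powr r
    \<le> (\<Sum>i\<in>K. u i powr r) + (\<Sum>i\<in>K. \<Sum>j\<in>K - {i}. u i * u j) powr (r / 2)"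
proof -
  have s: "0 < r / 2" "r / 2 \<le> 1" using assms by auto
  have "(\<Sum>i\<in>K. u i) powr r = ((\<Sum>i\<in>K. u i)\<^sup>2) powr (r / 2)"
    using assms by (intro powr_eq_power2_powr_half sum_nonneg) auto
  also have "\<dots> = ((\<Sum>i\<in>K. (u i)\<^sup>2) + (\<Sum>i\<in>K. \<Sum>j\<in>K - {i}. u i * u j)) powr (r / 2)"
    using assms by (simp add: power2_sum_eq_diagonal_plus_offdiagonal)
  also have "\<dots> \<le> (\<Sum>i\<in>K. (u i)\<^sup>2) powr (r / 2) + (\<Sum>i\<in>K. \<Sum>j\<in>K - {i}. u i * u j) powr (r / 2)"
    using assms s by (intro powr_add_le_add_powr sum_nonneg mult_nonneg_nonneg) auto
  also have "(\<Sum>i\<in>K. (u i)\<^sup>2) powr (r / 2) \<le> (\<Sum>i\<in>K. ((u i)\<^sup>2) powr (r / 2))"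
    using assms s by (intro powr_sum_le_sum_powr) auto
  also have "\<dots> = (\<Sum>i\<in>K. u i powr r)"
    using assms by (intro sum.cong refl powr_eq_power2_powr_half[symmetric]) auto
  finally show ?thesis by simp
qed

lemma powr_add_le_powr_plus_powr:
  fixes a b r :: real
  assumes "0 \<le> a" "0 \<le> b" "0 < r" "r \<le> 2"
  shows "(a + b) powr r \<le> a powr r + b powr r + (2 * a * b) powr (r / 2)"
proof -
  have s: "0 < r / 2" "r / 2 \<le> 1" using assms by auto
  have "(a + b) powr r = (a\<^sup>2 + b\<^sup>2 + 2 * a * b) powr (r / 2)"
    using assms powr_eq_power2_powr_half[of "a + b" r] by (simp add: power2_sum)
  also have "\<dots> \<le> (a\<^sup>2 + b\<^sup>2) powr (r / 2) + (2 * a * b) powr (r / 2)"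
    using assms s by (intro powr_add_le_add_powr) auto
  also have "(a\<^sup>2 + b\<^sup>2) powr (r / 2) \<le> (a\<^sup>2) powr (r / 2) + (b\<^sup>2) powr (r / 2)"
    using s by (intro powr_add_le_add_powr) auto
  finally show ?thesis
    using powr_eq_power2_powr_half[OF assms(1), of r] powr_eq_power2_powr_half[OF assms(2), of r]
    by simp
qed

lemma integrable_comp_cong_distr:
  fixes U W :: "'a \<Rightarrow> real" and g :: "real \<Rightarrow> real"
  assumes "U \<in> borel_measurable M" "W \<in> borel_measurable M"
    and "distr M borel U = distr M borel W" and "g \<in> borel_measurable borel"
  shows "integrable M (\<lambda>\<omega>. g (U \<omega>)) \<longleftrightarrow> integrable M (\<lambda>\<omega>. g (W \<omega>))"
  using integrable_distr_eq[OF assms(1,4)] integrable_distr_eq[OF assms(2,4)] assms(3) by simp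

lemma integral_comp_cong_distr:
  fixes U W :: "'a \<Rightarrow> real" and g :: "real \<Rightarrow> real"
  assumes "U \<in> borel_measurable M" "W \<in> borel_measurable M"
    and "distr M borel U = distr M borel W" and "g \<in> borel_measurable borel"
  shows "(\<integral>\<omega>. g (U \<omega>) \<partial>M) = (\<integral>\<omega>. g (W \<omega>) \<partial>M)"
  using integral_distr[OF assms(1,4)] integral_distr[OF assms(2,4)] assms(3) by simp

lemma measurable_nat_floor_pair:
  assumes "i \<in> I" "j \<in> I"
  shows "(\<lambda>v. (nat \<lfloor>v i\<rfloor>, nat \<lfloor>v j\<rfloor>)) \<in> PiM I (\<lambda>_. borel :: real measure) \<rightarrow>\<^sub>M count_space UNIV"
proof -
  have floor: "(\<lambda>x::real. nat \<lfloor>x\<rfloor>) \<in> borel \<rightarrow>\<^sub>M count_space UNIV"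
    by measurable
  have "(\<lambda>v. nat \<lfloor>v k\<rfloor>) \<in> PiM I (\<lambda>_. borel :: real measure) \<rightarrow>\<^sub>M count_space UNIV"
    if "k \<in> I" for k
    using measurable_comp[OF measurable_component_singleton[OF that] floor] by (simp add: comp_def)
  then have "(\<lambda>v. (nat \<lfloor>v i\<rfloor>, nat \<lfloor>v j\<rfloor>))
      \<in> PiM I (\<lambda>_. borel :: real measure) \<rightarrow>\<^sub>M count_space UNIV \<Otimes>\<^sub>M count_space UNIV"
    using assms by (intro measurable_Pair) auto
  then show ?thesis by (simp add: pair_measure_countable)
qed

context prob_space
begin

lemma integrable_of_integrable_powr:
  fixes f :: "'a \<Rightarrow> real"
  assumes "f \<in> borel_measurable M" "AE \<omega> in M. 0 \<le> f \<omega>"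
    and "1 \<le> r" "integrable M (\<lambda>\<omega>. f \<omega> powr r)"
  shows "integrable M f"
proof (rule Bochner_Integration.integrable_bound)
  show "integrable M (\<lambda>\<omega>. 1 + f \<omega> powr r)" using assms(4) by simp
  show "AE \<omega> in M. norm (f \<omega>) \<le> norm (1 + f \<omega> powr r)"
    using assms(2) by eventually_elim (use le_one_plus_powr assms(3) in auto)
qed (fact assms(1))

lemma integrable_powr_of_integrable:
  fixes T :: "'a \<Rightarrow> real"
  assumes "AE \<omega> in M. 0 \<le> T \<omega>" "integrable M T" "0 \<le> s" "s \<le> 1"
  shows "integrable M (\<lambda>\<omega>. T \<omega> powr s)"
proof (rule Bochner_Integration.integrable_bound)
  show "integrable M (\<lambda>\<omega>. 1 + T \<omega>)" using assms(2) by simp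
  show "AE \<omega> in M. norm (T \<omega> powr s) \<le> norm (1 + T \<omega>)"
    using assms(1) by eventually_elim (use powr_le_one_plus assms(3,4) in auto)
qed (use borel_measurable_integrable[OF assms(2)] in measurable)

lemma integrable_power2_of_integrable_powr:
  fixes f :: "'a \<Rightarrow> real"
  assumes "f \<in> borel_measurable M" "AE \<omega> in M. 0 \<le> f \<omega>" "integrable M (\<lambda>\<omega>. f \<omega> powr 2)"
  shows "integrable M (\<lambda>\<omega>. (f \<omega>)\<^sup>2)"
proof -
  have "AE \<omega> in M. f \<omega> powr 2 = (f \<omega>)\<^sup>2"
    using assms(2) by eventually_elim (simp add: powr_realpow')
  then show ?thesis
    using assms(1,3) by (subst integrable_cong_AE[symmetric]) auto
qed

text \<open>Jensen's inequality for the concave \<open>t \<mapsto> t powr s\<close>, via the tangent line at the mean.\<close>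

lemma integral_powr_le_powr_integral:
  fixes T :: "'a \<Rightarrow> real"
  assumes T: "AE \<omega> in M. 0 \<le> T \<omega>" "integrable M T" and s: "0 < s" "s \<le> 1"
  shows "(\<integral>\<omega>. T \<omega> powr s \<partial>M) \<le> (\<integral>\<omega>. T \<omega> \<partial>M) powr s"
proof -
  define a where "a = (\<integral>\<omega>. T \<omega> \<partial>M)"
  have "0 \<le> a" unfolding a_def using T(1) by (rule integral_nonneg_AE)
  show ?thesis
  proof (cases "a = 0")
    case True
    then have "AE \<omega> in M. T \<omega> = 0"
      using integral_nonneg_eq_0_iff_AE[OF T(2,1)] by (simp add: a_def)
    then have "AE \<omega> in M. T \<omega> powr s = 0" by eventually_elim simp
    then show ?thesis using True by (simp add: a_def integral_eq_zero_AE)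
  next
    case False
    with \<open>0 \<le> a\<close> have "0 < a" by simp
    have "(\<integral>\<omega>. T \<omega> powr s \<partial>M) \<le> (\<integral>\<omega>. (1 - s) * a powr s + s * a powr (s - 1) * T \<omega> \<partial>M)"
      using T(1) powr_le_tangent[OF _ \<open>0 < a\<close> s] T s
      by (intro integral_mono_AE integrable_powr_of_integrable) auto
    also have "\<dots> = (1 - s) * a powr s + s * a powr (s - 1) * a"
      using T(2) by (simp add: a_def prob_space)
    also have "\<dots> = a powr s"
      using \<open>0 < a\<close> by (simp add: powr_mult_base algebra_simps)
    finally show ?thesis by (simp add: a_def)
  qed
qed

lemma
  fixes U :: "'i \<Rightarrow> 'a \<Rightarrow> real" and W :: "'j \<Rightarrow> 'a \<Rightarrow> real"
  assumes indep: "\<And>i j. i \<in> I \<Longrightarrow> j \<in> J i \<Longrightarrow> indep_var borel (U i) borel (W j)"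
    and U: "\<And>i. i \<in> I \<Longrightarrow> integrable M (U i)"
    and W: "\<And>i j. i \<in> I \<Longrightarrow> j \<in> J i \<Longrightarrow> integrable M (W j)"
  shows indep_var_integral_double_sum:
      "(\<integral>\<omega>. (\<Sum>i\<in>I. \<Sum>j\<in>J i. U i \<omega> * W j \<omega>) \<partial>M)
        = (\<Sum>i\<in>I. \<Sum>j\<in>J i. (\<integral>\<omega>. U i \<omega> \<partial>M) * (\<integral>\<omega>. W j \<omega> \<partial>M))"
    and indep_var_integrable_double_sum:
      "integrable M (\<lambda>\<omega>. \<Sum>i\<in>I. \<Sum>j\<in>J i. U i \<omega> * W j \<omega>)"
proof -
  have UW: "integrable M (\<lambda>\<omega>. U i \<omega> * W j \<omega>)"
    "(\<integral>\<omega>. U i \<omega> * W j \<omega> \<partial>M) = (\<integral>\<omega>. U i \<omega> \<partial>M) * (\<integral>\<omega>. W j \<omega> \<partial>M)"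
    if "i \<in> I" "j \<in> J i" for i j
    using indep_var_integrable[OF indep U W] indep_var_lebesgue_integral[OF indep U W] that
    by simp_all
  show "integrable M (\<lambda>\<omega>. \<Sum>i\<in>I. \<Sum>j\<in>J i. U i \<omega> * W j \<omega>)"
    using UW(1) by (intro Bochner_Integration.integrable_sum) auto
  have "(\<integral>\<omega>. (\<Sum>i\<in>I. \<Sum>j\<in>J i. U i \<omega> * W j \<omega>) \<partial>M)
      = (\<Sum>i\<in>I. \<integral>\<omega>. (\<Sum>j\<in>J i. U i \<omega> * W j \<omega>) \<partial>M)"
    using UW(1) by (intro Bochner_Integration.integral_sum Bochner_Integration.integrable_sum) auto
  also have "\<dots> = (\<Sum>i\<in>I. \<Sum>j\<in>J i. \<integral>\<omega>. U i \<omega> * W j \<omega> \<partial>M)"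
    using UW(1) by (intro sum.cong refl Bochner_Integration.integral_sum) auto
  also have "\<dots> = (\<Sum>i\<in>I. \<Sum>j\<in>J i. (\<integral>\<omega>. U i \<omega> \<partial>M) * (\<integral>\<omega>. W j \<omega> \<partial>M))"
    using UW(2) by (intro sum.cong refl) auto
  finally show "(\<integral>\<omega>. (\<Sum>i\<in>I. \<Sum>j\<in>J i. U i \<omega> * W j \<omega>) \<partial>M)
      = (\<Sum>i\<in>I. \<Sum>j\<in>J i. (\<integral>\<omega>. U i \<omega> \<partial>M) * (\<integral>\<omega>. W j \<omega> \<partial>M))" .
qed

lemma nn_integral_indep_var:
  assumes indep: "indep_var S A T B"
    and h: "h \<in> borel_measurable (S \<Otimes>\<^sub>M T)"
  shows "(\<integral>\<^sup>+\<omega>. h (A \<omega>, B \<omega>) \<partial>M) = (\<integral>\<^sup>+\<omega>'. (\<integral>\<^sup>+\<omega>. h (A \<omega>', B \<omega>) \<partial>M) \<partial>M)"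
proof -
  have A: "A \<in> measurable M S" and B: "B \<in> measurable M T"
    using indep by (auto dest: indep_var_rv1 indep_var_rv2)
  interpret SA: prob_space "distr M S A" by (rule prob_space_distr) (rule A)
  interpret TB: prob_space "distr M T B" by (rule prob_space_distr) (rule B)
  interpret pair_sigma_finite "distr M S A" "distr M T B" ..
  have sets_eq: "sets (distr M S A \<Otimes>\<^sub>M distr M T B) = sets (S \<Otimes>\<^sub>M T)"
    by (intro sets_pair_measure_cong) simp_all
  have h': "h \<in> borel_measurable (distr M S A \<Otimes>\<^sub>M distr M T B)"
    using h by (simp cong: measurable_cong_sets[OF sets_eq refl])
  have inner: "(\<lambda>x. \<integral>\<^sup>+ y. h (x, y) \<partial>distr M T B) \<in> borel_measurable S"
    using TB.borel_measurable_nn_integral[of "\<lambda>x y. h (x, y)" "distr M S A"] h'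
    by (simp cong: measurable_cong_sets)
  have "(\<integral>\<^sup>+\<omega>. h (A \<omega>, B \<omega>) \<partial>M) = (\<integral>\<^sup>+x. h x \<partial>distr M (S \<Otimes>\<^sub>M T) (\<lambda>x. (A x, B x)))"
    using nn_integral_distr[OF measurable_Pair[OF A B]] h by (simp cong: measurable_cong_sets)
  also have "\<dots> = (\<integral>\<^sup>+x. h x \<partial>(distr M S A \<Otimes>\<^sub>M distr M T B))"
    using indep_var_distribution_eq[THEN iffD1, OF indep] by simp
  also have "\<dots> = (\<integral>\<^sup>+ x. \<integral>\<^sup>+ y. h (x, y) \<partial>distr M T B \<partial>distr M S A)"
    by (rule TB.nn_integral_fst[symmetric]) (rule h')
  also have "\<dots> = (\<integral>\<^sup>+ \<omega>'. \<integral>\<^sup>+ y. h (A \<omega>', y) \<partial>distr M T B \<partial>M)"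
    using nn_integral_distr[OF A] inner by (simp cong: measurable_cong_sets)
  also have "\<dots> = (\<integral>\<^sup>+\<omega>'. (\<integral>\<^sup>+\<omega>. h (A \<omega>', B \<omega>) \<partial>M) \<partial>M)"
  proof (intro nn_integral_cong)
    fix x assume "x \<in> space M"
    then have "(\<lambda>y. h (A x, y)) \<in> borel_measurable T"
      using measurable_comp[OF measurable_Pair1' h] measurable_space[OF A]
      by (simp add: comp_def)
    then show "(\<integral>\<^sup>+ y. h (A x, y) \<partial>distr M T B) = (\<integral>\<^sup>+\<omega>. h (A x, B \<omega>) \<partial>M)"
      using nn_integral_distr[OF B] by (simp cong: measurable_cong_sets)
  qed
  finally show ?thesis .
qed

end

locale pairwise_iid_sequence = prob_space +
  fixes U :: "nat \<Rightarrow> 'a \<Rightarrow> real"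
  assumes U_measurable: "\<And>k. 1 \<le> k \<Longrightarrow> U k \<in> borel_measurable M"
    and distr_U: "\<And>k. 1 \<le> k \<Longrightarrow> distr M borel (U k) = distr M borel (U 1)"
    and indep_var_U: "\<And>i j. 1 \<le> i \<Longrightarrow> 1 \<le> j \<Longrightarrow> i \<noteq> j \<Longrightarrow> indep_var borel (U i) borel (U j)"
begin

lemma
  fixes g :: "real \<Rightarrow> real"
  assumes "integrable M (\<lambda>\<omega>. g (U 1 \<omega>))" "g \<in> borel_measurable borel" "1 \<le> k"
  shows integrable_comp: "integrable M (\<lambda>\<omega>. g (U k \<omega>))"
    and integral_comp: "(\<integral>\<omega>. g (U k \<omega>) \<partial>M) = (\<integral>\<omega>. g (U 1 \<omega>) \<partial>M)"
proof -
  note distr = U_measurable[OF assms(3)] U_measurable[OF order_refl] distr_U[OF assms(3)] assms(2)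
  show "integrable M (\<lambda>\<omega>. g (U k \<omega>))"
    using integrable_comp_cong_distr[OF distr] assms(1) by blast
  show "(\<integral>\<omega>. g (U k \<omega>) \<partial>M) = (\<integral>\<omega>. g (U 1 \<omega>) \<partial>M)"
    by (rule integral_comp_cong_distr[OF distr])
qed

lemma sum_integral_comp:
  fixes g :: "real \<Rightarrow> real"
  assumes "integrable M (\<lambda>\<omega>. g (U 1 \<omega>))" "g \<in> borel_measurable borel"
  shows "(\<Sum>i=1..n. \<integral>\<omega>. g (U i \<omega>) \<partial>M) = real n * (\<integral>\<omega>. g (U 1 \<omega>) \<partial>M)"
proof -
  have "(\<Sum>i=1..n. \<integral>\<omega>. g (U i \<omega>) \<partial>M) = (\<Sum>i=1..n. \<integral>\<omega>. g (U 1 \<omega>) \<partial>M)"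
    using assms by (intro sum.cong refl integral_comp) auto
  then show ?thesis by simp
qed

lemma
  fixes g :: "real \<Rightarrow> real"
  assumes "integrable M (\<lambda>\<omega>. g (U 1 \<omega>))" "g \<in> borel_measurable borel"
  shows integral_sum_comp: "(\<integral>\<omega>. (\<Sum>i=1..n. g (U i \<omega>)) \<partial>M) = real n * (\<integral>\<omega>. g (U 1 \<omega>) \<partial>M)"
    and integrable_sum_comp: "integrable M (\<lambda>\<omega>. \<Sum>i=1..n. g (U i \<omega>))"
proof -
  have int: "integrable M (\<lambda>\<omega>. g (U i \<omega>))" if "i \<in> {1..n}" for i
    using that by (intro integrable_comp[OF assms]) auto
  show "integrable M (\<lambda>\<omega>. \<Sum>i=1..n. g (U i \<omega>))"
    by (rule Bochner_Integration.integrable_sum) (rule int)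
  have "(\<integral>\<omega>. (\<Sum>i=1..n. g (U i \<omega>)) \<partial>M) = (\<Sum>i=1..n. \<integral>\<omega>. g (U i \<omega>) \<partial>M)"
    by (rule Bochner_Integration.integral_sum) (rule int)
  also have "\<dots> = real n * (\<integral>\<omega>. g (U 1 \<omega>) \<partial>M)"
    by (rule sum_integral_comp[OF assms])
  finally show "(\<integral>\<omega>. (\<Sum>i=1..n. g (U i \<omega>)) \<partial>M) = real n * (\<integral>\<omega>. g (U 1 \<omega>) \<partial>M)" .
qed

lemma
  assumes "integrable M (U 1)"
  shows integral_offdiagonal:
      "(\<integral>\<omega>. (\<Sum>i\<in>{1..n}. \<Sum>j\<in>{1..n} - {i}. U i \<omega> * U j \<omega>) \<partial>M)
        = (real n * expectation (U 1))\<^sup>2 - real n * (expectation (U 1))\<^sup>2"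
    and integrable_offdiagonal:
      "integrable M (\<lambda>\<omega>. \<Sum>i\<in>{1..n}. \<Sum>j\<in>{1..n} - {i}. U i \<omega> * U j \<omega>)"
proof -
  have U: "integrable M (U i)" "expectation (U i) = expectation (U 1)" if "i \<in> {1..n}" for i
    using that integrable_comp[of "\<lambda>x. x" i] integral_comp[of "\<lambda>x. x" i] assms by auto
  have "(\<integral>\<omega>. (\<Sum>i\<in>{1..n}. \<Sum>j\<in>{1..n} - {i}. U i \<omega> * U j \<omega>) \<partial>M)
      = (\<Sum>i\<in>{1..n}. \<Sum>j\<in>{1..n} - {i}. expectation (U i) * expectation (U j))"
    by (rule indep_var_integral_double_sum) (auto intro: indep_var_U U(1))
  also have "\<dots> = (\<Sum>i\<in>{1..n}. \<Sum>j\<in>{1..n} - {i}. expectation (U 1) * expectation (U 1))"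
    by (intro sum.cong refl arg_cong2[where f = "(*)"] U(2)) auto
  also have "\<dots> = (real n * expectation (U 1))\<^sup>2 - real n * (expectation (U 1))\<^sup>2"
    using power2_sum_eq_diagonal_plus_offdiagonal[of "{1..n}" "\<lambda>_. expectation (U 1)"]
    by simp
  finally show "(\<integral>\<omega>. (\<Sum>i\<in>{1..n}. \<Sum>j\<in>{1..n} - {i}. U i \<omega> * U j \<omega>) \<partial>M)
        = (real n * expectation (U 1))\<^sup>2 - real n * (expectation (U 1))\<^sup>2" .
  show "integrable M (\<lambda>\<omega>. \<Sum>i\<in>{1..n}. \<Sum>j\<in>{1..n} - {i}. U i \<omega> * U j \<omega>)"
    by (rule indep_var_integrable_double_sum) (auto intro: indep_var_U U(1))
qed

lemma
  assumes "integrable M (\<lambda>\<omega>. (U 1 \<omega>)\<^sup>2)"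
  shows integral_sum_power2:
      "(\<integral>\<omega>. (\<Sum>i=1..n. U i \<omega>)\<^sup>2 \<partial>M) = real n * variance (U 1) + (real n * expectation (U 1))\<^sup>2"
    and integrable_sum_power2: "integrable M (\<lambda>\<omega>. (\<Sum>i=1..n. U i \<omega>)\<^sup>2)"
proof -
  have U1: "integrable M (U 1)"
    using square_integrable_imp_integrable[OF U_measurable assms] by simp
  note split = power2_sum_eq_diagonal_plus_offdiagonal[OF finite_atLeastAtMost]
  show "integrable M (\<lambda>\<omega>. (\<Sum>i=1..n. U i \<omega>)\<^sup>2)"
    unfolding split using assms U1
    by (intro Bochner_Integration.integrable_add integrable_sum_comp integrable_offdiagonal) auto
  have "(\<integral>\<omega>. (\<Sum>i=1..n. U i \<omega>)\<^sup>2 \<partial>M)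
      = (\<integral>\<omega>. (\<Sum>i=1..n. (U i \<omega>)\<^sup>2) \<partial>M)
        + (\<integral>\<omega>. (\<Sum>i\<in>{1..n}. \<Sum>j\<in>{1..n} - {i}. U i \<omega> * U j \<omega>) \<partial>M)"
    unfolding split using assms U1
    by (intro Bochner_Integration.integral_add integrable_sum_comp integrable_offdiagonal) auto
  also have "\<dots> = real n * (\<integral>\<omega>. (U 1 \<omega>)\<^sup>2 \<partial>M)
      + ((real n * expectation (U 1))\<^sup>2 - real n * (expectation (U 1))\<^sup>2)"
    using integral_sum_comp[of "\<lambda>x. x\<^sup>2" n] assms integral_offdiagonal[OF U1] by simp
  also have "\<dots> = real n * variance (U 1) + (real n * expectation (U 1))\<^sup>2"
    unfolding variance_eq[OF U1 assms] by (simp only: right_diff_distrib)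
  finally show "(\<integral>\<omega>. (\<Sum>i=1..n. U i \<omega>)\<^sup>2 \<partial>M) = real n * variance (U 1) + (real n * expectation (U 1))\<^sup>2" .
qed

lemma
  assumes nonneg: "\<And>k. 1 \<le> k \<Longrightarrow> AE \<omega> in M. 0 \<le> U k \<omega>"
    and U1: "integrable M (U 1)" and r: "0 < r" "r \<le> 2"
  shows integral_offdiagonal_powr_le:
      "(\<integral>\<omega>. (\<Sum>i\<in>{1..n}. \<Sum>j\<in>{1..n} - {i}. U i \<omega> * U j \<omega>) powr (r / 2) \<partial>M)
        \<le> real n powr r * expectation (U 1) powr r"
    and integrable_offdiagonal_powr:
      "integrable M (\<lambda>\<omega>. (\<Sum>i\<in>{1..n}. \<Sum>j\<in>{1..n} - {i}. U i \<omega> * U j \<omega>) powr (r / 2))"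
proof -
  let ?Q = "\<lambda>\<omega>. \<Sum>i\<in>{1..n}. \<Sum>j\<in>{1..n} - {i}. U i \<omega> * U j \<omega>"
  let ?\<mu> = "expectation (U 1)"
  have s: "0 < r / 2" "r / 2 \<le> 1" using r by auto
  have "0 \<le> ?\<mu>" using nonneg[of 1] by (simp add: integral_nonneg_AE)
  have "AE \<omega> in M. \<forall>i\<in>{1..n}. 0 \<le> U i \<omega>"
    using nonneg by (subst AE_finite_all) auto
  then have Q_nonneg: "AE \<omega> in M. 0 \<le> ?Q \<omega>"
    by eventually_elim (auto intro!: sum_nonneg)
  note Q = integrable_offdiagonal[OF U1] integral_offdiagonal[OF U1]
  show "integrable M (\<lambda>\<omega>. ?Q \<omega> powr (r / 2))"
    using s by (intro integrable_powr_of_integrable[OF Q_nonneg Q(1)]) auto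
  have "(\<integral>\<omega>. ?Q \<omega> powr (r / 2) \<partial>M) \<le> ((real n * ?\<mu>)\<^sup>2 - real n * ?\<mu>\<^sup>2) powr (r / 2)"
    using integral_powr_le_powr_integral[OF Q_nonneg Q(1) s] Q(2) by simp
  also have "\<dots> \<le> ((real n * ?\<mu>)\<^sup>2) powr (r / 2)"
    using integral_nonneg_AE[OF Q_nonneg] Q(2) s by (intro powr_mono2) auto
  also have "\<dots> = real n powr r * ?\<mu> powr r"
    using \<open>0 \<le> ?\<mu>\<close> powr_eq_power2_powr_half[of "real n * ?\<mu>" r] by (simp add: powr_mult)
  finally show "(\<integral>\<omega>. ?Q \<omega> powr (r / 2) \<partial>M) \<le> real n powr r * ?\<mu> powr r" .
qed

lemma
  assumes nonneg: "\<And>k. 1 \<le> k \<Longrightarrow> AE \<omega> in M. 0 \<le> U k \<omega>"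
    and r: "1 \<le> r" "r \<le> 2" and moment: "integrable M (\<lambda>\<omega>. U 1 \<omega> powr r)"
  shows integral_sum_powr_le:
      "(\<integral>\<omega>. (\<Sum>i=1..n. U i \<omega>) powr r \<partial>M)
        \<le> real n * (\<integral>\<omega>. U 1 \<omega> powr r \<partial>M) + real n powr r * expectation (U 1) powr r"
    and integrable_sum_powr: "integrable M (\<lambda>\<omega>. (\<Sum>i=1..n. U i \<omega>) powr r)"
proof -
  define Q where "Q \<omega> = (\<Sum>i\<in>{1..n}. \<Sum>j\<in>{1..n} - {i}. U i \<omega> * U j \<omega>)" for \<omega>
  have r0: "0 < r" using r by simp
  have U1: "integrable M (U 1)"
    using integrable_of_integrable_powr[OF U_measurable nonneg r(1) moment] by simp
  have "AE \<omega> in M. \<forall>i\<in>{1..n}. 0 \<le> U i \<omega>"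
    using nonneg by (subst AE_finite_all) auto
  then have bound:
      "AE \<omega> in M. (\<Sum>i=1..n. U i \<omega>) powr r \<le> (\<Sum>i=1..n. U i \<omega> powr r) + Q \<omega> powr (r / 2)"
    by eventually_elim (use r in \<open>auto simp: Q_def intro: powr_sum_le_sum_powr_plus_offdiagonal\<close>)
  have sum_powr: "integrable M (\<lambda>\<omega>. \<Sum>i=1..n. U i \<omega> powr r)"
    by (rule integrable_sum_comp[OF moment]) measurable
  have Q_powr: "integrable M (\<lambda>\<omega>. Q \<omega> powr (r / 2))"
    unfolding Q_def by (rule integrable_offdiagonal_powr[OF nonneg U1 r0 r(2)])
  have int_bound: "integrable M (\<lambda>\<omega>. (\<Sum>i=1..n. U i \<omega> powr r) + Q \<omega> powr (r / 2))"
    using sum_powr Q_powr by (rule Bochner_Integration.integrable_add)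
  have "(\<lambda>\<omega>. (\<Sum>i=1..n. U i \<omega>) powr r) \<in> borel_measurable M"
    by (intro powr_real_measurable borel_measurable_sum U_measurable measurable_const) auto
  then show int: "integrable M (\<lambda>\<omega>. (\<Sum>i=1..n. U i \<omega>) powr r)"
  proof (rule Bochner_Integration.integrable_bound[OF int_bound])
    show "AE \<omega> in M. norm ((\<Sum>i=1..n. U i \<omega>) powr r)
        \<le> norm ((\<Sum>i=1..n. U i \<omega> powr r) + Q \<omega> powr (r / 2))"
      using bound by eventually_elim (metis abs_of_nonneg order_trans powr_ge_zero real_norm_def)
  qed
  have "(\<integral>\<omega>. (\<Sum>i=1..n. U i \<omega>) powr r \<partial>M)
      \<le> (\<integral>\<omega>. (\<Sum>i=1..n. U i \<omega> powr r) + Q \<omega> powr (r / 2) \<partial>M)"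
    by (rule integral_mono_AE[OF int int_bound bound])
  also have "\<dots> = (\<integral>\<omega>. (\<Sum>i=1..n. U i \<omega> powr r) \<partial>M) + (\<integral>\<omega>. Q \<omega> powr (r / 2) \<partial>M)"
    by (rule Bochner_Integration.integral_add[OF sum_powr Q_powr])
  also have "(\<integral>\<omega>. (\<Sum>i=1..n. U i \<omega> powr r) \<partial>M) = real n * (\<integral>\<omega>. U 1 \<omega> powr r \<partial>M)"
    by (rule integral_sum_comp[OF moment]) measurable
  also have "(\<integral>\<omega>. Q \<omega> powr (r / 2) \<partial>M) \<le> real n powr r * expectation (U 1) powr r"
    unfolding Q_def by (rule integral_offdiagonal_powr_le[OF nonneg U1 r0 r(2)])
  finally show "(\<integral>\<omega>. (\<Sum>i=1..n. U i \<omega>) powr r \<partial>M)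
        \<le> real n * (\<integral>\<omega>. U 1 \<omega> powr r \<partial>M) + real n powr r * expectation (U 1) powr r"
    by simp
qed

end

locale compound_sum_pair = prob_space +
  fixes V1 V2 :: "'a \<Rightarrow> nat" and X Y :: "nat \<Rightarrow> 'a \<Rightarrow> real" and r :: real
  assumes V1_rv[measurable]: "V1 \<in> measurable M (count_space UNIV)"
    and V2_rv[measurable]: "V2 \<in> measurable M (count_space UNIV)"
    and X_rv: "\<And>k. k \<ge> 1 \<Longrightarrow> X k \<in> borel_measurable M"
    and Y_rv: "\<And>k. k \<ge> 1 \<Longrightarrow> Y k \<in> borel_measurable M"
    and X_nonneg: "\<And>k. k \<ge> 1 \<Longrightarrow> AE \<omega> in M. X k \<omega> \<ge> 0"
    and Y_nonneg: "\<And>k. k \<ge> 1 \<Longrightarrow> AE \<omega> in M. Y k \<omega> \<ge> 0"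
    and X_ident: "\<And>k. k \<ge> 1 \<Longrightarrow> distr M borel (X k) = distr M borel (X 1)"
    and Y_ident: "\<And>k. k \<ge> 1 \<Longrightarrow> distr M borel (Y k) = distr M borel (Y 1)"
    and indep: "indep_vars (\<lambda>_. borel) (rv_family V1 V2 X Y) rv_indices"
    and r: "1 < r" "r \<le> 2"
    and XY_mom: "integrable M (\<lambda>\<omega>. X 1 \<omega> powr r + Y 1 \<omega> powr r)"
    and V_mom: "integrable M (\<lambda>\<omega>. real (V1 \<omega>) powr r + real (V2 \<omega>) powr r)"
begin

lemma indep_var_rv_family:
  assumes "i \<in> rv_indices" "j \<in> rv_indices" "i \<noteq> j"
  shows "indep_var borel (rv_family V1 V2 X Y i) borel (rv_family V1 V2 X Y j)"
proof -
  have "indep_var (PiM {i} (\<lambda>_. borel)) (\<lambda>\<omega>. restrict (\<lambda>k. rv_family V1 V2 X Y k \<omega>) {i})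
      (PiM {j} (\<lambda>_. borel)) (\<lambda>\<omega>. restrict (\<lambda>k. rv_family V1 V2 X Y k \<omega>) {j})"
    using assms by (intro indep_var_restrict[OF indep]) auto
  then have "indep_var borel ((\<lambda>f. f i) \<circ> (\<lambda>\<omega>. restrict (\<lambda>k. rv_family V1 V2 X Y k \<omega>) {i}))
      borel ((\<lambda>f. f j) \<circ> (\<lambda>\<omega>. restrict (\<lambda>k. rv_family V1 V2 X Y k \<omega>) {j}))"
    by (rule indep_var_compose) (auto intro: measurable_component_singleton)
  then show ?thesis by (simp add: comp_def)
qed

sublocale X: pairwise_iid_sequence M X
proof unfold_locales
  fix i j :: nat
  assume "1 \<le> i" "1 \<le> j" "i \<noteq> j"
  then show "indep_var borel (X i) borel (X j)"
    using indep_var_rv_family[of "IX i" "IX j"] by (simp add: rv_indices_def rv_family_def)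
qed (fact X_rv X_ident)+

sublocale Y: pairwise_iid_sequence M Y
proof unfold_locales
  fix i j :: nat
  assume "1 \<le> i" "1 \<le> j" "i \<noteq> j"
  then show "indep_var borel (Y i) borel (Y j)"
    using indep_var_rv_family[of "IY i" "IY j"] by (simp add: rv_indices_def rv_family_def)
qed (fact Y_rv Y_ident)+

lemma X_moment: "integrable M (\<lambda>\<omega>. X 1 \<omega> powr r)"
  by (rule Bochner_Integration.integrable_bound[OF XY_mom]) (use X_rv[of 1] in auto)

lemma Y_moment: "integrable M (\<lambda>\<omega>. Y 1 \<omega> powr r)"
  by (rule Bochner_Integration.integrable_bound[OF XY_mom]) (use Y_rv[of 1] in auto)

lemma V1_moment: "integrable M (\<lambda>\<omega>. real (V1 \<omega>) powr r)"
  by (rule Bochner_Integration.integrable_bound[OF V_mom]) auto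

lemma V2_moment: "integrable M (\<lambda>\<omega>. real (V2 \<omega>) powr r)"
  by (rule Bochner_Integration.integrable_bound[OF V_mom]) auto

lemma integrable_X1: "integrable M (X 1)"
  using r
  by (intro integrable_of_integrable_powr[OF X_rv[OF order_refl] X_nonneg[OF order_refl] _ X_moment])
    simp

lemma integrable_Y1: "integrable M (Y 1)"
  using r
  by (intro integrable_of_integrable_powr[OF Y_rv[OF order_refl] Y_nonneg[OF order_refl] _ Y_moment])
    simp

lemma integrable_V1: "integrable M (\<lambda>\<omega>. real (V1 \<omega>))"
proof (rule integrable_of_integrable_powr[OF _ _ _ V1_moment])
  show "(\<lambda>\<omega>. real (V1 \<omega>)) \<in> borel_measurable M" by measurable
qed (use r in auto)

lemma integrable_V2: "integrable M (\<lambda>\<omega>. real (V2 \<omega>))"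
proof (rule integrable_of_integrable_powr[OF _ _ _ V2_moment])
  show "(\<lambda>\<omega>. real (V2 \<omega>)) \<in> borel_measurable M" by measurable
qed (use r in auto)

lemma
  shows integral_V1_mult_V2:
      "(\<integral>\<omega>. real (V1 \<omega>) * real (V2 \<omega>) \<partial>M) = (\<integral>\<omega>. real (V1 \<omega>) \<partial>M) * (\<integral>\<omega>. real (V2 \<omega>) \<partial>M)"
    and integrable_V1_mult_V2: "integrable M (\<lambda>\<omega>. real (V1 \<omega>) * real (V2 \<omega>))"
  using indep_var_rv_family[of IV1 IV2] integrable_V1 integrable_V2
    indep_var_lebesgue_integral indep_var_integrable
  by (auto simp: rv_indices_def rv_family_def)

lemma
  shows integral_sum_X_mult_sum_Y: "(\<integral>\<omega>. (\<Sum>i=1..n. X i \<omega>) * (\<Sum>j=1..m. Y j \<omega>) \<partial>M)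
      = (real n * expectation (X 1)) * (real m * expectation (Y 1))"
    and integrable_sum_X_mult_sum_Y: "integrable M (\<lambda>\<omega>. (\<Sum>i=1..n. X i \<omega>) * (\<Sum>j=1..m. Y j \<omega>))"
proof -
  have indep_XY: "indep_var borel (X i) borel (Y j)" if "i \<in> {1..n}" "j \<in> {1..m}" for i j
    using that indep_var_rv_family[of "IX i" "IY j"] by (auto simp: rv_indices_def rv_family_def)
  have X: "integrable M (X i)" if "i \<in> {1..n}" for i
    using that X.integrable_comp[OF integrable_X1 measurable_ident_sets[OF refl]] by simp
  have Y: "integrable M (Y j)" if "j \<in> {1..m}" for j
    using that Y.integrable_comp[OF integrable_Y1 measurable_ident_sets[OF refl]] by simp
  have expand: "(\<lambda>\<omega>. (\<Sum>i=1..n. X i \<omega>) * (\<Sum>j=1..m. Y j \<omega>))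
      = (\<lambda>\<omega>. \<Sum>i=1..n. \<Sum>j=1..m. X i \<omega> * Y j \<omega>)"
    by (simp add: sum_product)
  show "integrable M (\<lambda>\<omega>. (\<Sum>i=1..n. X i \<omega>) * (\<Sum>j=1..m. Y j \<omega>))"
    unfolding expand by (rule indep_var_integrable_double_sum) (auto intro: indep_XY X Y)
  have "(\<integral>\<omega>. (\<Sum>i=1..n. X i \<omega>) * (\<Sum>j=1..m. Y j \<omega>) \<partial>M)
      = (\<Sum>i=1..n. \<Sum>j=1..m. expectation (X i) * expectation (Y j))"
    unfolding expand by (rule indep_var_integral_double_sum) (auto intro: indep_XY X Y)
  also have "\<dots> = (\<Sum>i=1..n. expectation (X i)) * (\<Sum>j=1..m. expectation (Y j))"
    by (rule sum_product[symmetric])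
  also have "\<dots> = (real n * expectation (X 1)) * (real m * expectation (Y 1))"
    by (simp only: X.sum_integral_comp[OF integrable_X1 measurable_ident_sets[OF refl]]
        Y.sum_integral_comp[OF integrable_Y1 measurable_ident_sets[OF refl]])
  finally show "(\<integral>\<omega>. (\<Sum>i=1..n. X i \<omega>) * (\<Sum>j=1..m. Y j \<omega>) \<partial>M)
      = (real n * expectation (X 1)) * (real m * expectation (Y 1))" .
qed

definition partial_sums :: "nat \<Rightarrow> nat \<Rightarrow> 'a \<Rightarrow> real" where
  "partial_sums n m \<omega> = (\<Sum>i=1..n. X i \<omega>) + (\<Sum>j=1..m. Y j \<omega>)"

lemma partial_sums_measurable: "partial_sums n m \<in> borel_measurable M"
  unfolding partial_sums_def[abs_def]
  by (intro borel_measurable_add borel_measurable_sum) (auto intro: X_rv Y_rv)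

lemma
  assumes "integrable M (\<lambda>\<omega>. (X 1 \<omega>)\<^sup>2)" "integrable M (\<lambda>\<omega>. (Y 1 \<omega>)\<^sup>2)"
  shows integral_partial_sums_power2: "(\<integral>\<omega>. (partial_sums n m \<omega>)\<^sup>2 \<partial>M)
      = real n * variance (X 1) + real m * variance (Y 1)
        + (real n * expectation (X 1) + real m * expectation (Y 1))\<^sup>2"
    and integrable_partial_sums_power2: "integrable M (\<lambda>\<omega>. (partial_sums n m \<omega>)\<^sup>2)"
proof -
  have expand: "(partial_sums n m \<omega>)\<^sup>2 = (\<Sum>i=1..n. X i \<omega>)\<^sup>2 + (\<Sum>j=1..m. Y j \<omega>)\<^sup>2
      + 2 * ((\<Sum>i=1..n. X i \<omega>) * (\<Sum>j=1..m. Y j \<omega>))" for \<omega>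
    by (simp add: partial_sums_def power2_sum)
  note integrable = X.integrable_sum_power2[OF assms(1)] Y.integrable_sum_power2[OF assms(2)]
    integrable_sum_X_mult_sum_Y
  show "integrable M (\<lambda>\<omega>. (partial_sums n m \<omega>)\<^sup>2)"
    unfolding expand using integrable by simp
  show "(\<integral>\<omega>. (partial_sums n m \<omega>)\<^sup>2 \<partial>M)
      = real n * variance (X 1) + real m * variance (Y 1)
        + (real n * expectation (X 1) + real m * expectation (Y 1))\<^sup>2"
    unfolding expand using integrable X.integral_sum_power2[OF assms(1)]
      Y.integral_sum_power2[OF assms(2)] integral_sum_X_mult_sum_Y
    by (simp add: power2_sum algebra_simps)
qed

lemma AE_sums_nonneg: "AE \<omega> in M. 0 \<le> (\<Sum>i=1..n. X i \<omega>) \<and> 0 \<le> (\<Sum>j=1..m. Y j \<omega>)"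
proof -
  have "AE \<omega> in M. \<forall>i\<in>{1..n}. 0 \<le> X i \<omega>" "AE \<omega> in M. \<forall>j\<in>{1..m}. 0 \<le> Y j \<omega>"
    using X_nonneg Y_nonneg by (subst AE_finite_all; auto)+
  then show ?thesis by eventually_elim (auto intro: sum_nonneg)
qed

lemma
  shows integral_cross_term_powr_le:
      "(\<integral>\<omega>. (2 * (\<Sum>i=1..n. X i \<omega>) * (\<Sum>j=1..m. Y j \<omega>)) powr (r / 2) \<partial>M)
        \<le> (2 * real n * real m * expectation (X 1) * expectation (Y 1)) powr (r / 2)"
    and integrable_cross_term_powr:
      "integrable M (\<lambda>\<omega>. (2 * (\<Sum>i=1..n. X i \<omega>) * (\<Sum>j=1..m. Y j \<omega>)) powr (r / 2))"
proof -
  let ?C = "\<lambda>\<omega>. 2 * (\<Sum>i=1..n. X i \<omega>) * (\<Sum>j=1..m. Y j \<omega>)"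
  have s: "0 < r / 2" "r / 2 \<le> 1" using r by auto
  have C_nonneg: "AE \<omega> in M. 0 \<le> ?C \<omega>"
    using AE_sums_nonneg[of n m] by eventually_elim simp
  have C_integrable: "integrable M ?C"
    unfolding mult.assoc by (intro integrable_mult_right integrable_sum_X_mult_sum_Y)
  have C_integral: "integral\<^sup>L M ?C = 2 * real n * real m * expectation (X 1) * expectation (Y 1)"
    unfolding mult.assoc integral_mult_right_zero integral_sum_X_mult_sum_Y by (simp add: ac_simps)
  show "integrable M (\<lambda>\<omega>. ?C \<omega> powr (r / 2))"
    using s by (intro integrable_powr_of_integrable[OF C_nonneg C_integrable]) auto
  show "(\<integral>\<omega>. ?C \<omega> powr (r / 2) \<partial>M)
      \<le> (2 * real n * real m * expectation (X 1) * expectation (Y 1)) powr (r / 2)"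
    using integral_powr_le_powr_integral[OF C_nonneg C_integrable s] C_integral by simp
qed

definition powr_moment_bound :: "nat \<Rightarrow> nat \<Rightarrow> real" where
  "powr_moment_bound n m =
    real n * expectation (\<lambda>\<omega>. X 1 \<omega> powr r) + real m * expectation (\<lambda>\<omega>. Y 1 \<omega> powr r)
    + (2 * real n * real m * expectation (X 1) * expectation (Y 1)) powr (r / 2)
    + real n powr r * expectation (X 1) powr r + real m powr r * expectation (Y 1) powr r"

lemma
  shows integral_partial_sums_powr_le:
      "(\<integral>\<omega>. partial_sums n m \<omega> powr r \<partial>M) \<le> powr_moment_bound n m"
    and integrable_partial_sums_powr: "integrable M (\<lambda>\<omega>. partial_sums n m \<omega> powr r)"
proof -
  define A where "A \<omega> = (\<Sum>i=1..n. X i \<omega>)" for \<omega>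
  define B where "B \<omega> = (\<Sum>j=1..m. Y j \<omega>)" for \<omega>
  have r1: "1 \<le> r" using r by simp
  note A_powr = X.integrable_sum_powr[OF X_nonneg r1 r(2) X_moment, of n]
  note B_powr = Y.integrable_sum_powr[OF Y_nonneg r1 r(2) Y_moment, of m]
  note C_powr = integrable_cross_term_powr[of n m]
  have int_bound: "integrable M (\<lambda>\<omega>. A \<omega> powr r + B \<omega> powr r + (2 * A \<omega> * B \<omega>) powr (r / 2))"
    unfolding A_def B_def using A_powr B_powr C_powr by (intro Bochner_Integration.integrable_add)
  have bound: "AE \<omega> in M.
      partial_sums n m \<omega> powr r \<le> A \<omega> powr r + B \<omega> powr r + (2 * A \<omega> * B \<omega>) powr (r / 2)"
    using AE_sums_nonneg[of n m] by eventually_elim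
      (use r in \<open>simp add: partial_sums_def A_def B_def powr_add_le_powr_plus_powr\<close>)
  have "(\<lambda>\<omega>. partial_sums n m \<omega> powr r) \<in> borel_measurable M"
    using partial_sums_measurable by measurable
  then show int: "integrable M (\<lambda>\<omega>. partial_sums n m \<omega> powr r)"
  proof (rule Bochner_Integration.integrable_bound[OF int_bound])
    show "AE \<omega> in M. norm (partial_sums n m \<omega> powr r)
        \<le> norm (A \<omega> powr r + B \<omega> powr r + (2 * A \<omega> * B \<omega>) powr (r / 2))"
      using bound by eventually_elim (metis abs_of_nonneg order_trans powr_ge_zero real_norm_def)
  qed
  have "(\<integral>\<omega>. partial_sums n m \<omega> powr r \<partial>M)
      \<le> (\<integral>\<omega>. A \<omega> powr r + B \<omega> powr r + (2 * A \<omega> * B \<omega>) powr (r / 2) \<partial>M)"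
    by (rule integral_mono_AE[OF int int_bound bound])
  also have "\<dots> = (\<integral>\<omega>. A \<omega> powr r \<partial>M) + (\<integral>\<omega>. B \<omega> powr r \<partial>M)
      + (\<integral>\<omega>. (2 * A \<omega> * B \<omega>) powr (r / 2) \<partial>M)"
    unfolding A_def B_def using A_powr B_powr C_powr by simp
  also have "\<dots> \<le> powr_moment_bound n m"
    unfolding A_def B_def powr_moment_bound_def
    using X.integral_sum_powr_le[OF X_nonneg r1 r(2) X_moment, of n]
      Y.integral_sum_powr_le[OF Y_nonneg r1 r(2) Y_moment, of m]
      integral_cross_term_powr_le[of n m]
    by linarith
  finally show "(\<integral>\<omega>. partial_sums n m \<omega> powr r \<partial>M) \<le> powr_moment_bound n m" .
qed

lemma measurable_random_index:
  assumes "\<And>n m. f n m \<in> borel_measurable M"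
  shows "(\<lambda>\<omega>. f (V1 \<omega>) (V2 \<omega>) \<omega>) \<in> borel_measurable M"
proof -
  have "(\<lambda>\<omega>. (V1 \<omega>, V2 \<omega>)) \<in> M \<rightarrow>\<^sub>M count_space UNIV"
    using measurable_Pair[OF V1_rv V2_rv] by (simp add: pair_measure_countable)
  from measurable_compose_countable'[where f = "\<lambda>p. f (fst p) (snd p)" and I = UNIV, OF _ this]
  show ?thesis using assms by simp
qed

definition indices :: "'a \<Rightarrow> rv_index \<Rightarrow> real" where
  "indices \<omega> = restrict (\<lambda>i. rv_family V1 V2 X Y i \<omega>) {IV1, IV2}"

definition sequences :: "'a \<Rightarrow> rv_index \<Rightarrow> real" where
  "sequences \<omega> = restrict (\<lambda>i. rv_family V1 V2 X Y i \<omega>) (rv_indices - {IV1, IV2})"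

lemma indep_var_indices_sequences:
  "indep_var (PiM {IV1, IV2} (\<lambda>_. borel)) indices (PiM (rv_indices - {IV1, IV2}) (\<lambda>_. borel)) sequences"
  unfolding indices_def sequences_def
  by (intro indep_var_restrict[OF indep]) (auto simp: rv_indices_def)

lemma nn_integral_partial_sums_random_index:
  assumes F: "F \<in> borel_measurable borel"
  shows "(\<integral>\<^sup>+\<omega>. ennreal (F (partial_sums (V1 \<omega>) (V2 \<omega>) \<omega>)) \<partial>M)
    = (\<integral>\<^sup>+\<omega>'. (\<integral>\<^sup>+\<omega>. ennreal (F (partial_sums (V1 \<omega>') (V2 \<omega>') \<omega>)) \<partial>M) \<partial>M)"
proof -
  let ?P = "PiM {IV1, IV2} (\<lambda>_. borel :: real measure)"
  let ?Q = "PiM (rv_indices - {IV1, IV2}) (\<lambda>_. borel :: real measure)"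
  \<comment> \<open>The family carries \<open>V1\<close>, \<open>V2\<close> as reals; \<open>nat \<lfloor>_\<rfloor>\<close> recovers them.\<close>
  define index :: "(rv_index \<Rightarrow> real) \<Rightarrow> nat \<times> nat" where
    "index v = (nat \<lfloor>v IV1\<rfloor>, nat \<lfloor>v IV2\<rfloor>)" for v
  define H :: "nat \<times> nat \<Rightarrow> (rv_index \<Rightarrow> real) \<Rightarrow> ennreal" where
    "H p w = ennreal (F ((\<Sum>i=1..fst p. w (IX i)) + (\<Sum>j=1..snd p. w (IY j))))" for p w
  have index: "index \<in> ?P \<rightarrow>\<^sub>M count_space UNIV"
    unfolding index_def by (rule measurable_nat_floor_pair) auto
  have H: "H p \<in> borel_measurable ?Q" for p
  proof -
    have "(\<lambda>w. (\<Sum>i=1..fst p. w (IX i)) + (\<Sum>j=1..snd p. w (IY j))) \<in> borel_measurable ?Q"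
      by (intro borel_measurable_add borel_measurable_sum measurable_component_singleton)
        (auto simp: rv_indices_def)
    from measurable_compose[OF measurable_compose[OF this F] measurable_ennreal]
    show ?thesis by (simp add: H_def[abs_def])
  qed
  have h: "(\<lambda>x. H (index (fst x)) (snd x)) \<in> borel_measurable (?P \<Otimes>\<^sub>M ?Q)"
  proof (rule measurable_compose_countable'[where f = "\<lambda>p x. H p (snd x)" and I = UNIV])
    show "(\<lambda>x. H p (snd x)) \<in> borel_measurable (?P \<Otimes>\<^sub>M ?Q)" if "p \<in> UNIV" for p
      using measurable_comp[OF measurable_snd H] by (simp add: comp_def)
    show "(\<lambda>x. index (fst x)) \<in> ?P \<Otimes>\<^sub>M ?Q \<rightarrow>\<^sub>M count_space UNIV"
      using measurable_comp[OF measurable_fst index] by (simp add: comp_def)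
  qed simp
  have "H (index (indices \<omega>')) (sequences \<omega>) = ennreal (F (partial_sums (V1 \<omega>') (V2 \<omega>') \<omega>))"
    for \<omega> \<omega>'
    by (simp add: H_def index_def indices_def sequences_def partial_sums_def rv_indices_def
        rv_family_def)
  then show ?thesis
    using nn_integral_indep_var[OF indep_var_indices_sequences h] by simp
qed

lemma
  fixes F :: "real \<Rightarrow> real"
  assumes F: "F \<in> borel_measurable borel" "\<And>x. 0 \<le> F x"
    and integrable_F: "\<And>n m. integrable M (\<lambda>\<omega>. F (partial_sums n m \<omega>))"
    and integrable_mixture: "integrable M (\<lambda>\<omega>'. \<integral>\<omega>. F (partial_sums (V1 \<omega>') (V2 \<omega>') \<omega>) \<partial>M)"
  shows integral_partial_sums_random_index:
      "(\<integral>\<omega>. F (partial_sums (V1 \<omega>) (V2 \<omega>) \<omega>) \<partial>M)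
        = (\<integral>\<omega>'. (\<integral>\<omega>. F (partial_sums (V1 \<omega>') (V2 \<omega>') \<omega>) \<partial>M) \<partial>M)"
    and integrable_partial_sums_random_index:
      "integrable M (\<lambda>\<omega>. F (partial_sums (V1 \<omega>) (V2 \<omega>) \<omega>))"
proof -
  let ?E = "\<lambda>\<omega>'. \<integral>\<omega>. F (partial_sums (V1 \<omega>') (V2 \<omega>') \<omega>) \<partial>M"
  have "(\<integral>\<^sup>+\<omega>. ennreal (F (partial_sums (V1 \<omega>) (V2 \<omega>) \<omega>)) \<partial>M) = (\<integral>\<^sup>+\<omega>'. ennreal (?E \<omega>') \<partial>M)"
    using nn_integral_partial_sums_random_index[OF F(1)] integrable_F F(2)
    by (simp add: nn_integral_eq_integral)
  also have "\<dots> = ennreal (\<integral>\<omega>'. ?E \<omega>' \<partial>M)"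
    using integrable_mixture F(2) by (simp add: nn_integral_eq_integral)
  finally have nn: "(\<integral>\<^sup>+\<omega>. ennreal (F (partial_sums (V1 \<omega>) (V2 \<omega>) \<omega>)) \<partial>M) = ennreal (\<integral>\<omega>'. ?E \<omega>' \<partial>M)" .
  have meas: "(\<lambda>\<omega>. F (partial_sums (V1 \<omega>) (V2 \<omega>) \<omega>)) \<in> borel_measurable M"
    by (rule measurable_random_index, rule measurable_compose[OF partial_sums_measurable F(1)])
  show "integrable M (\<lambda>\<omega>. F (partial_sums (V1 \<omega>) (V2 \<omega>) \<omega>))"
    using meas nn F(2) by (intro integrableI_nonneg) auto
  show "(\<integral>\<omega>. F (partial_sums (V1 \<omega>) (V2 \<omega>) \<omega>) \<partial>M) = (\<integral>\<omega>'. ?E \<omega>' \<partial>M)"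
  proof -
    have "0 \<le> (\<integral>\<omega>'. ?E \<omega>' \<partial>M)"
      by (simp add: F(2))
    then show ?thesis
      using integral_eq_nn_integral[OF meas] nn F(2) by simp
  qed
qed

lemma
  fixes F :: "real \<Rightarrow> real" and G :: "nat \<Rightarrow> nat \<Rightarrow> real"
  assumes F: "F \<in> borel_measurable borel" "\<And>x. 0 \<le> F x"
    and integrable_F: "\<And>n m. integrable M (\<lambda>\<omega>. F (partial_sums n m \<omega>))"
    and le: "\<And>n m. (\<integral>\<omega>. F (partial_sums n m \<omega>) \<partial>M) \<le> G n m"
    and integrable_G: "integrable M (\<lambda>\<omega>. G (V1 \<omega>) (V2 \<omega>))"
  shows integral_partial_sums_random_index_le:
      "(\<integral>\<omega>. F (partial_sums (V1 \<omega>) (V2 \<omega>) \<omega>) \<partial>M) \<le> (\<integral>\<omega>. G (V1 \<omega>) (V2 \<omega>) \<partial>M)"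
    and integrable_partial_sums_random_index_le:
      "integrable M (\<lambda>\<omega>. F (partial_sums (V1 \<omega>) (V2 \<omega>) \<omega>))"
proof -
  let ?E = "\<lambda>\<omega>'. \<integral>\<omega>. F (partial_sums (V1 \<omega>') (V2 \<omega>') \<omega>) \<partial>M"
  have E_integrable: "integrable M ?E"
  proof (rule Bochner_Integration.integrable_bound[OF integrable_G])
    show "?E \<in> borel_measurable M"
      using measurable_random_index[of "\<lambda>n m _. \<integral>\<omega>. F (partial_sums n m \<omega>) \<partial>M"] by simp
    show "AE \<omega> in M. norm (?E \<omega>) \<le> norm (G (V1 \<omega>) (V2 \<omega>))"
    proof (rule AE_I2)
      fix \<omega>
      have "0 \<le> ?E \<omega>" by (simp add: F(2))
      with le[of "V1 \<omega>" "V2 \<omega>"] show "norm (?E \<omega>) \<le> norm (G (V1 \<omega>) (V2 \<omega>))"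
        unfolding real_norm_def by linarith
    qed
  qed
  show "integrable M (\<lambda>\<omega>. F (partial_sums (V1 \<omega>) (V2 \<omega>) \<omega>))"
    using F integrable_F E_integrable by (rule integrable_partial_sums_random_index)
  have "(\<integral>\<omega>. F (partial_sums (V1 \<omega>) (V2 \<omega>) \<omega>) \<partial>M) = (\<integral>\<omega>'. ?E \<omega>' \<partial>M)"
    using F integrable_F E_integrable by (rule integral_partial_sums_random_index)
  also have "\<dots> \<le> (\<integral>\<omega>. G (V1 \<omega>) (V2 \<omega>) \<partial>M)"
    by (intro integral_mono E_integrable integrable_G le)
  finally show "(\<integral>\<omega>. F (partial_sums (V1 \<omega>) (V2 \<omega>) \<omega>) \<partial>M) \<le> (\<integral>\<omega>. G (V1 \<omega>) (V2 \<omega>) \<partial>M)" .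
qed

lemma compound_sum_power2:
  assumes "r = 2"
  shows "integrable M (\<lambda>\<omega>. (partial_sums (V1 \<omega>) (V2 \<omega>) \<omega>)\<^sup>2)
    \<and> (\<integral>\<omega>. (partial_sums (V1 \<omega>) (V2 \<omega>) \<omega>)\<^sup>2 \<partial>M)
      = expectation (\<lambda>\<omega>. real (V1 \<omega>)) * variance (X 1)
        + expectation (\<lambda>\<omega>. real (V2 \<omega>)) * variance (Y 1)
        + 2 * expectation (\<lambda>\<omega>. real (V1 \<omega>)) * expectation (\<lambda>\<omega>. real (V2 \<omega>))
            * expectation (X 1) * expectation (Y 1)
        + expectation (\<lambda>\<omega>. (real (V1 \<omega>))\<^sup>2) * (expectation (X 1))\<^sup>2
        + expectation (\<lambda>\<omega>. (real (V2 \<omega>))\<^sup>2) * (expectation (Y 1))\<^sup>2"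
proof -
  have X2: "integrable M (\<lambda>\<omega>. (X 1 \<omega>)\<^sup>2)"
    using integrable_power2_of_integrable_powr[OF X_rv[OF order_refl] X_nonneg[OF order_refl]]
      X_moment assms by simp
  have Y2: "integrable M (\<lambda>\<omega>. (Y 1 \<omega>)\<^sup>2)"
    using integrable_power2_of_integrable_powr[OF Y_rv[OF order_refl] Y_nonneg[OF order_refl]]
      Y_moment assms by simp
  have V1_2: "integrable M (\<lambda>\<omega>. (real (V1 \<omega>))\<^sup>2)"
    using integrable_power2_of_integrable_powr[OF borel_measurable_integrable[OF integrable_V1]]
      V1_moment assms by simp
  have V2_2: "integrable M (\<lambda>\<omega>. (real (V2 \<omega>))\<^sup>2)"
    using integrable_power2_of_integrable_powr[OF borel_measurable_integrable[OF integrable_V2]]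
      V2_moment assms by simp
  define G where "G n m = real n * variance (X 1) + real m * variance (Y 1)
      + (real n * expectation (X 1) + real m * expectation (Y 1))\<^sup>2" for n m :: nat
  have expand: "G (V1 \<omega>) (V2 \<omega>) = real (V1 \<omega>) * variance (X 1) + real (V2 \<omega>) * variance (Y 1)
      + 2 * expectation (X 1) * expectation (Y 1) * (real (V1 \<omega>) * real (V2 \<omega>))
      + (expectation (X 1))\<^sup>2 * (real (V1 \<omega>))\<^sup>2 + (expectation (Y 1))\<^sup>2 * (real (V2 \<omega>))\<^sup>2" for \<omega>
    by (simp add: G_def power2_eq_square algebra_simps)
  have mixture: "(\<lambda>\<omega>'. \<integral>\<omega>. (partial_sums (V1 \<omega>') (V2 \<omega>') \<omega>)\<^sup>2 \<partial>M) = (\<lambda>\<omega>'. G (V1 \<omega>') (V2 \<omega>'))"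
    using integral_partial_sums_power2[OF X2 Y2] by (simp add: G_def)
  have "integrable M (\<lambda>\<omega>. G (V1 \<omega>) (V2 \<omega>))"
    unfolding expand using integrable_V1 integrable_V2 integrable_V1_mult_V2 V1_2 V2_2 by simp
  then have "integrable M (\<lambda>\<omega>. (partial_sums (V1 \<omega>) (V2 \<omega>) \<omega>)\<^sup>2)
      \<and> (\<integral>\<omega>. (partial_sums (V1 \<omega>) (V2 \<omega>) \<omega>)\<^sup>2 \<partial>M) = (\<integral>\<omega>. G (V1 \<omega>) (V2 \<omega>) \<partial>M)"
    using integrable_partial_sums_random_index[of "\<lambda>x. x\<^sup>2"]
      integral_partial_sums_random_index[of "\<lambda>x. x\<^sup>2"] integrable_partial_sums_power2[OF X2 Y2]
    by (simp add: mixture)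
  moreover have "(\<integral>\<omega>. G (V1 \<omega>) (V2 \<omega>) \<partial>M)
      = expectation (\<lambda>\<omega>. real (V1 \<omega>)) * variance (X 1)
        + expectation (\<lambda>\<omega>. real (V2 \<omega>)) * variance (Y 1)
        + 2 * expectation (X 1) * expectation (Y 1)
          * (expectation (\<lambda>\<omega>. real (V1 \<omega>)) * expectation (\<lambda>\<omega>. real (V2 \<omega>)))
        + (expectation (X 1))\<^sup>2 * expectation (\<lambda>\<omega>. (real (V1 \<omega>))\<^sup>2)
        + (expectation (Y 1))\<^sup>2 * expectation (\<lambda>\<omega>. (real (V2 \<omega>))\<^sup>2)"
    unfolding expand using integrable_V1 integrable_V2 integrable_V1_mult_V2 V1_2 V2_2
    by (simp add: integral_V1_mult_V2)
  ultimately show ?thesis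
    by (simp add: algebra_simps)
qed

lemma
  defines "\<mu> \<equiv> expectation (X 1)" and "\<nu> \<equiv> expectation (Y 1)"
  shows integral_powr_moment_bound_random_index_le:
      "(\<integral>\<omega>. powr_moment_bound (V1 \<omega>) (V2 \<omega>) \<partial>M)
        \<le> expectation (\<lambda>\<omega>. real (V1 \<omega>)) * expectation (\<lambda>\<omega>. X 1 \<omega> powr r)
          + expectation (\<lambda>\<omega>. real (V2 \<omega>)) * expectation (\<lambda>\<omega>. Y 1 \<omega> powr r)
          + (2 * expectation (\<lambda>\<omega>. real (V1 \<omega>)) * expectation (\<lambda>\<omega>. real (V2 \<omega>)) * \<mu> * \<nu>) powr (r / 2)
          + expectation (\<lambda>\<omega>. real (V1 \<omega>) powr r) * \<mu> powr r
          + expectation (\<lambda>\<omega>. real (V2 \<omega>) powr r) * \<nu> powr r"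
    and integrable_powr_moment_bound_random_index:
      "integrable M (\<lambda>\<omega>. powr_moment_bound (V1 \<omega>) (V2 \<omega>))"
proof -
  have s: "0 < r / 2" "r / 2 \<le> 1" using r by auto
  have "0 \<le> \<mu>" "0 \<le> \<nu>"
    unfolding \<mu>_def \<nu>_def using X_nonneg[of 1] Y_nonneg[of 1] by (simp_all add: integral_nonneg_AE)
  define T where "T \<omega> = 2 * real (V1 \<omega>) * real (V2 \<omega>) * \<mu> * \<nu>" for \<omega>
  have T_eq: "T = (\<lambda>\<omega>. (2 * \<mu> * \<nu>) * (real (V1 \<omega>) * real (V2 \<omega>)))"
    by (simp add: T_def[abs_def] ac_simps)
  have T_integrable: "integrable M T"
    unfolding T_eq using integrable_V1_mult_V2 by simp
  have T_integral: "integral\<^sup>L M T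
      = 2 * expectation (\<lambda>\<omega>. real (V1 \<omega>)) * expectation (\<lambda>\<omega>. real (V2 \<omega>)) * \<mu> * \<nu>"
    unfolding T_eq integral_mult_right_zero integral_V1_mult_V2 by (simp add: ac_simps)
  have T_nonneg: "AE \<omega> in M. 0 \<le> T \<omega>"
    using \<open>0 \<le> \<mu>\<close> \<open>0 \<le> \<nu>\<close> by (simp add: T_def)
  note integrable = integrable_V1 integrable_V2 V1_moment V2_moment
    integrable_powr_of_integrable[OF T_nonneg T_integrable] s
  show "integrable M (\<lambda>\<omega>. powr_moment_bound (V1 \<omega>) (V2 \<omega>))"
    using integrable by (simp add: powr_moment_bound_def T_def \<mu>_def \<nu>_def)
  have "(\<integral>\<omega>. powr_moment_bound (V1 \<omega>) (V2 \<omega>) \<partial>M)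
      = expectation (\<lambda>\<omega>. real (V1 \<omega>)) * expectation (\<lambda>\<omega>. X 1 \<omega> powr r)
        + expectation (\<lambda>\<omega>. real (V2 \<omega>)) * expectation (\<lambda>\<omega>. Y 1 \<omega> powr r)
        + (\<integral>\<omega>. T \<omega> powr (r / 2) \<partial>M)
        + expectation (\<lambda>\<omega>. real (V1 \<omega>) powr r) * \<mu> powr r
        + expectation (\<lambda>\<omega>. real (V2 \<omega>) powr r) * \<nu> powr r"
    using integrable by (simp add: powr_moment_bound_def T_def \<mu>_def \<nu>_def)
  moreover have "(\<integral>\<omega>. T \<omega> powr (r / 2) \<partial>M)
      \<le> (2 * expectation (\<lambda>\<omega>. real (V1 \<omega>)) * expectation (\<lambda>\<omega>. real (V2 \<omega>)) * \<mu> * \<nu>) powr (r / 2)"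
    using integral_powr_le_powr_integral[OF T_nonneg T_integrable s] T_integral by simp
  ultimately show "(\<integral>\<omega>. powr_moment_bound (V1 \<omega>) (V2 \<omega>) \<partial>M)
        \<le> expectation (\<lambda>\<omega>. real (V1 \<omega>)) * expectation (\<lambda>\<omega>. X 1 \<omega> powr r)
          + expectation (\<lambda>\<omega>. real (V2 \<omega>)) * expectation (\<lambda>\<omega>. Y 1 \<omega> powr r)
          + (2 * expectation (\<lambda>\<omega>. real (V1 \<omega>)) * expectation (\<lambda>\<omega>. real (V2 \<omega>)) * \<mu> * \<nu>) powr (r / 2)
          + expectation (\<lambda>\<omega>. real (V1 \<omega>) powr r) * \<mu> powr r
          + expectation (\<lambda>\<omega>. real (V2 \<omega>) powr r) * \<nu> powr r"
    by linarith
qed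

lemma compound_sum_powr_le:
  "integrable M (\<lambda>\<omega>. partial_sums (V1 \<omega>) (V2 \<omega>) \<omega> powr r)
    \<and> (\<integral>\<omega>. partial_sums (V1 \<omega>) (V2 \<omega>) \<omega> powr r \<partial>M)
      \<le> expectation (\<lambda>\<omega>. real (V1 \<omega>)) * expectation (\<lambda>\<omega>. X 1 \<omega> powr r)
        + expectation (\<lambda>\<omega>. real (V2 \<omega>)) * expectation (\<lambda>\<omega>. Y 1 \<omega> powr r)
        + (2 * expectation (\<lambda>\<omega>. real (V1 \<omega>)) * expectation (\<lambda>\<omega>. real (V2 \<omega>))
            * expectation (X 1) * expectation (Y 1)) powr (r / 2)
        + expectation (\<lambda>\<omega>. real (V1 \<omega>) powr r) * expectation (X 1) powr r
        + expectation (\<lambda>\<omega>. real (V2 \<omega>) powr r) * expectation (Y 1) powr r"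
  using integral_partial_sums_random_index_le[of "\<lambda>x. x powr r" powr_moment_bound]
    integrable_partial_sums_random_index_le[of "\<lambda>x. x powr r" powr_moment_bound]
    integrable_partial_sums_powr integral_partial_sums_powr_le
    integrable_powr_moment_bound_random_index integral_powr_moment_bound_random_index_le
  by fastforce

end

theorem lemmaA6:
  fixes M :: "'a measure"
    and V1 V2 :: "'a \<Rightarrow> nat"
    and X Y :: "nat \<Rightarrow> 'a \<Rightarrow> real"
    and r :: real
  assumes M: "prob_space M"
    and V1_rv: "V1 \<in> measurable M (count_space UNIV)"
    and V2_rv: "V2 \<in> measurable M (count_space UNIV)"
    and X_rv: "\<And>k. k \<ge> 1 \<Longrightarrow> X k \<in> borel_measurable M"
    and Y_rv: "\<And>k. k \<ge> 1 \<Longrightarrow> Y k \<in> borel_measurable M"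
    and X_nonneg: "\<And>k. k \<ge> 1 \<Longrightarrow> AE \<omega> in M. X k \<omega> \<ge> 0"
    and Y_nonneg: "\<And>k. k \<ge> 1 \<Longrightarrow> AE \<omega> in M. Y k \<omega> \<ge> 0"
    and X_ident: "\<And>k. k \<ge> 1 \<Longrightarrow> distr M borel (X k) = distr M borel (X 1)"
    and Y_ident: "\<And>k. k \<ge> 1 \<Longrightarrow> distr M borel (Y k) = distr M borel (Y 1)"
    and indep: "prob_space.indep_vars M (\<lambda>_. borel) (rv_family V1 V2 X Y) rv_indices"
    and r: "1 < r" "r \<le> 2"
    and XY_mom: "integrable M (\<lambda>\<omega>. X 1 \<omega> powr r + Y 1 \<omega> powr r)"
    and V_mom: "integrable M (\<lambda>\<omega>. real (V1 \<omega>) powr r + real (V2 \<omega>) powr r)"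
  shows
    "(r = 2 \<longrightarrow>
       integrable M (\<lambda>\<omega>. ((\<Sum>i=1..V1 \<omega>. X i \<omega>) + (\<Sum>i=1..V2 \<omega>. Y i \<omega>))^2) \<and>
       (\<integral>\<omega>. ((\<Sum>i=1..V1 \<omega>. X i \<omega>) + (\<Sum>i=1..V2 \<omega>. Y i \<omega>))^2 \<partial>M) =
         (\<integral>\<omega>. real (V1 \<omega>) \<partial>M) * (\<integral>\<omega>. (X 1 \<omega> - (\<integral>\<omega>'. X 1 \<omega>' \<partial>M))^2 \<partial>M)
       + (\<integral>\<omega>. real (V2 \<omega>) \<partial>M) * (\<integral>\<omega>. (Y 1 \<omega> - (\<integral>\<omega>'. Y 1 \<omega>' \<partial>M))^2 \<partial>M)
       + 2 * (\<integral>\<omega>. real (V1 \<omega>) \<partial>M) * (\<integral>\<omega>. real (V2 \<omega>) \<partial>M)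
           * (\<integral>\<omega>. X 1 \<omega> \<partial>M) * (\<integral>\<omega>. Y 1 \<omega> \<partial>M)
       + (\<integral>\<omega>. real (V1 \<omega>)^2 \<partial>M) * (\<integral>\<omega>. X 1 \<omega> \<partial>M)^2
       + (\<integral>\<omega>. real (V2 \<omega>)^2 \<partial>M) * (\<integral>\<omega>. Y 1 \<omega> \<partial>M)^2)
   \<and> (r < 2 \<longrightarrow>
       integrable M (\<lambda>\<omega>. ((\<Sum>i=1..V1 \<omega>. X i \<omega>) + (\<Sum>i=1..V2 \<omega>. Y i \<omega>)) powr r) \<and>
       (\<integral>\<omega>. ((\<Sum>i=1..V1 \<omega>. X i \<omega>) + (\<Sum>i=1..V2 \<omega>. Y i \<omega>)) powr r \<partial>M) \<le>
         (\<integral>\<omega>. real (V1 \<omega>) \<partial>M) * (\<integral>\<omega>. X 1 \<omega> powr r \<partial>M)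
       + (\<integral>\<omega>. real (V2 \<omega>) \<partial>M) * (\<integral>\<omega>. Y 1 \<omega> powr r \<partial>M)
       + (2 * (\<integral>\<omega>. real (V1 \<omega>) \<partial>M) * (\<integral>\<omega>. real (V2 \<omega>) \<partial>M)
           * (\<integral>\<omega>. X 1 \<omega> \<partial>M) * (\<integral>\<omega>. Y 1 \<omega> \<partial>M)) powr (r / 2)
       + (\<integral>\<omega>. real (V1 \<omega>) powr r \<partial>M) * (\<integral>\<omega>. X 1 \<omega> \<partial>M) powr r
       + (\<integral>\<omega>. real (V2 \<omega>) powr r \<partial>M) * (\<integral>\<omega>. Y 1 \<omega> \<partial>M) powr r)"
proof -
  interpret compound_sum_pair M V1 V2 X Y r
    by (intro compound_sum_pair.intro compound_sum_pair_axioms.intro) (fact assms)+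
  have "(\<Sum>i=1..V1 \<omega>. X i \<omega>) + (\<Sum>i=1..V2 \<omega>. Y i \<omega>) = partial_sums (V1 \<omega>) (V2 \<omega>) \<omega>" for \<omega>
    by (simp add: partial_sums_def)
  then show ?thesis
    using compound_sum_power2 compound_sum_powr_le by simp
qed

end
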